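(* Let $f:X\to\mathcal G$ be a convex function and $x_0\in\operatorname{dom} f$. (1) If $f(x_0)\in\operatorname{Min} f[X]$, then $x_0$ solves the scalarized Minty inequality: for all $x\in X$ with $f(x)\ne f(x_0)$ there exists $z^*\in C^-\setminus\{0\}$ with $\varphi_{f,z^*}(x)\ne-\infty$ and $\varphi'_{f,z^*}(x,x_0-x)<0$. (2) Let $M^*\subseteq C^-\setminus\{0\}$ be a finite set. If for all $x\in X$ with $f(x)\neq f(x_0)$ there exists $z^*\in M^*$ with $\varphi_{f,z^*}(x)\ne-\infty$ and $\varphi'_{f,z^*}(x,x_0-x)<0$, and if for every $x\in X$ and every $z^*\in M^*$ the function $t\mapsto\varphi_{f,z^*}(x_0+t(x-x_0))$ (for $t\in[0,1]$, $+\infty$ otherwise) is lower semicontinuous at $t=0$, then $f(x_0)\in\operatorname{Min}f[X]$.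
   Context: $X$ is a real linear space and $Z$ a real locally convex Hausdorff space with topological dual $Z^*$. $C\subseteq Z$ is a closed convex cone with $0\in C$ such that $C^-=\{z^*\in Z^*: z^*(c)\le 0\ \forall c\in C\}$ satisfies $C^-\setminus\{0\}\ne\emptyset$. Let $\mathcal G=\{A\subseteq Z: A=\operatorname{cl}\operatorname{co}(A+C)\}$, $A\oplus B=\operatorname{cl}\{a+b\}$, $tA=\{ta\}$ for $t>0$. $f:X\to\mathcal G$ is convex if $f(tx_1+(1-t)x_2)\supseteq tf(x_1)\oplus(1-t)f(x_2)$ for $t\in(0,1)$; $\operatorname{dom}f=\{x:f(x)\ne\emptyset\}$. $f(x_0)\in\operatorname{Min}f[X]$ means: for all $x\in X$, $f(x)\supseteq f(x_0)$ implies $f(x)=f(x_0)$. On $\overline{\mathbb R}$ use inf-addition $\dot+$ ($(-\infty)\dot+(+\infty)=+\infty$) and $r\ominus s=\inf\{t\in\mathbb R:r\le s\dot+t\}$ ($\inf\emptyset=+\infty$). $\varphi_{f,z^*}(x)=\inf\{-z^*(z):z\in f(x)\}$ ($+\infty$ if $f(x)=\emptyset$), $\varphi'_{f,z^*}(x,u)=\inf_{t>0}\frac1t\big(\varphi_{f,z^*}(x+tu)\ominus\varphi_{f,z^*}(x)\big)$. *)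

theory Defs
  imports "HOL-Analysis.Analysis"
begin

text \<open>Z is a real locally convex Hausdorff topological vector space: the type class
  t2_space gives Hausdorff; the predicate below gives continuity of the vector operations
  and a neighbourhood base of convex open sets.\<close>
definition lc_tvs :: "('z::{real_vector,t2_space}) itself \<Rightarrow> bool" where
  "lc_tvs _ \<longleftrightarrow>
     continuous_on UNIV (\<lambda>p::'z \<times> 'z. fst p + snd p) \<and>
     continuous_on UNIV (\<lambda>p::real \<times> 'z. fst p *\<^sub>R snd p) \<and>
     (\<forall>U (z::'z). open U \<and> z \<in> U \<longrightarrow> (\<exists>V. open V \<and> convex V \<and> z \<in> V \<and> V \<subseteq> U))"

definition top_dual :: "('z::{real_vector,topological_space} \<Rightarrow> real) set" where
  "top_dual = {zs. linear zs \<and> continuous_on UNIV zs}"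

definition neg_dual_cone :: "('z::{real_vector,topological_space}) set \<Rightarrow> ('z \<Rightarrow> real) set" where
  "neg_dual_cone C = {zs \<in> top_dual. \<forall>c\<in>C. zs c \<le> 0}"

definition sum_set :: "'z::real_vector set \<Rightarrow> 'z set \<Rightarrow> 'z set" where
  "sum_set A B = {a + b | a b. a \<in> A \<and> b \<in> B}"

definition G_space :: "('z::{real_vector,topological_space}) set \<Rightarrow> 'z set set" where
  "G_space C = {A. A = closure (convex hull (sum_set A C))}"

definition oplus_set :: "'z::{real_vector,topological_space} set \<Rightarrow> 'z set \<Rightarrow> 'z set" where
  "oplus_set A B = closure (sum_set A B)"

definition sv_convex :: "('x::real_vector \<Rightarrow> 'z::{real_vector,topological_space} set) \<Rightarrow> bool" where
  "sv_convex f \<longleftrightarrow> (\<forall>x1 x2 t. 0 < t \<and> t < 1 \<longrightarrow>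
      oplus_set ((\<lambda>z. t *\<^sub>R z) ` f x1) ((\<lambda>z. (1 - t) *\<^sub>R z) ` f x2)
        \<subseteq> f (t *\<^sub>R x1 + (1 - t) *\<^sub>R x2))"

definition sv_dom :: "('x \<Rightarrow> 'z set) \<Rightarrow> 'x set" where
  "sv_dom f = {x. f x \<noteq> {}}"

definition is_Min_value :: "('x \<Rightarrow> 'z set) \<Rightarrow> 'x \<Rightarrow> bool" where
  "is_Min_value f x0 \<longleftrightarrow> (\<forall>x. f x0 \<subseteq> f x \<longrightarrow> f x = f x0)"

text \<open>Inf-difference on extended reals (ereal addition is the inf-addition:
  (-\<infinity>) + \<infinity> = \<infinity>); Inf of the empty set is \<infinity>.\<close>
definition ediff :: "ereal \<Rightarrow> ereal \<Rightarrow> ereal" where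
  "ediff r s = Inf (ereal ` {t. r \<le> s + ereal t})"

definition phi :: "('x \<Rightarrow> 'z set) \<Rightarrow> ('z \<Rightarrow> real) \<Rightarrow> 'x \<Rightarrow> ereal" where
  "phi f zs x = Inf ((\<lambda>z. - ereal (zs z)) ` f x)"

definition phi_dir :: "('x::real_vector \<Rightarrow> 'z set) \<Rightarrow> ('z \<Rightarrow> real) \<Rightarrow> 'x \<Rightarrow> 'x \<Rightarrow> ereal" where
  "phi_dir f zs x u = (INF t\<in>{0<..}. ereal (1 / t) * ediff (phi f zs (x + t *\<^sub>R u)) (phi f zs x))"

definition lsc_at_pt :: "(real \<Rightarrow> ereal) \<Rightarrow> real \<Rightarrow> bool" where
  "lsc_at_pt g t0 \<longleftrightarrow> (\<forall>y < g t0. \<forall>\<^sub>F t in at t0. y < g t)"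

end

theory Submission
  imports Defs
begin

text \<open>
  (1) If f(x) differs from the minimal value f(x0), minimality gives a point z0 \<in> f(x0) outside
  f(x) = cl co (f(x) + C). Separating z0 from co (f(x) + C) by a continuous linear functional
  (Hahn--Banach with a Minkowski functional) yields a nonzero z* in the negative dual cone of C with
  \<phi>(x0) < \<phi>(x) < \<infinity>, and convexity of \<phi> along the segment makes the directional
  derivative at x towards x0 negative.

  (2) Suppose f(x0) \<subseteq> f(x) \<noteq> f(x0). Along the segment P(s) = x0 + s(x - x0) the values
  f(P(s)) all contain f(x0) and, for 0 < s < 1, differ from it (closedness of f(x0)). So for
  every small s some z* \<in> M has a negative directional derivative of the convex function
  H(s) = \<phi>(P(s)) at s towards 0, i.e. H decreases strictly towards 0 arbitrarily close to 0.
  Since H \<le> H(0) on [0,1], convexity and lower semicontinuity at 0 forbid this for each single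
  z*; finiteness of M makes the admissible neighbourhoods of 0 uniform.
\<close>

section \<open>Sublinear functionals and the Hahn--Banach theorem\<close>

definition sublinear :: "('a::real_vector \<Rightarrow> real) \<Rightarrow> bool" where
  "sublinear p \<longleftrightarrow> (\<forall>x y. p (x + y) \<le> p x + p y) \<and> (\<forall>x c. 0 < c \<longrightarrow> p (c *\<^sub>R x) = c * p x)"

lemma sublinear_add: "sublinear p \<Longrightarrow> p (x + y) \<le> p x + p y"
  unfolding sublinear_def by blast

lemma sublinear_scaleR: "sublinear p \<Longrightarrow> 0 < c \<Longrightarrow> p (c *\<^sub>R x) = c * p x"
  unfolding sublinear_def by blast

lemma sublinear_zero: assumes "sublinear p" shows "p 0 = 0"
  using sublinear_scaleR[OF assms, of 2 0] by simp

lemma sublinear_scaleR_nonneg: "sublinear p \<Longrightarrow> 0 \<le> c \<Longrightarrow> p (c *\<^sub>R x) = c * p x"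
  by (cases "c = 0") (auto simp: sublinear_zero sublinear_scaleR)

lemma sublinear_uminus_le: assumes "sublinear p" shows "- p (- x) \<le> p x"
  using sublinear_add[OF assms, of x "-x"] sublinear_zero[OF assms] by simp

text \<open>For c \<le> p w, pushing the argument along the ray spanned by w and paying c per unit
  length gives a sublinear functional below p. A minimal sublinear functional m cannot be
  lowered this way, which forces m(x + w) \<ge> m x + m w.\<close>

definition ray_infimum :: "('a::real_vector \<Rightarrow> real) \<Rightarrow> 'a \<Rightarrow> real \<Rightarrow> 'a \<Rightarrow> real" where
  "ray_infimum p w c y = (INF t\<in>{0..}. p (y + t *\<^sub>R w) - t * c)"

lemma ray_infimum_bdd_below:
  assumes p: "sublinear p" and c: "c \<le> p w"
  shows "bdd_below ((\<lambda>t. p (y + t *\<^sub>R w) - t * c) ` {0..})"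
proof (rule bdd_belowI2)
  fix t :: real assume t: "t \<in> {0..}"
  have "t * p w \<le> p (y + t *\<^sub>R w) + p (- y)"
    using sublinear_add[OF p, of "y + t *\<^sub>R w" "-y"] sublinear_scaleR_nonneg[OF p, of t w] t by simp
  moreover have "t * c \<le> t * p w" using c t by (simp add: mult_left_mono)
  ultimately show "- p (- y) \<le> p (y + t *\<^sub>R w) - t * c" by linarith
qed

lemma ray_infimum_le:
  assumes "sublinear p" and "c \<le> p w" and "0 \<le> t"
  shows "ray_infimum p w c y \<le> p (y + t *\<^sub>R w) - t * c"
  unfolding ray_infimum_def using assms by (intro cINF_lower ray_infimum_bdd_below) auto

lemma ray_infimum_greatest:
  assumes "\<And>t. 0 \<le> t \<Longrightarrow> a \<le> p (y + t *\<^sub>R w) - t * c"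
  shows "a \<le> ray_infimum p w c y"
  unfolding ray_infimum_def using assms by (intro cINF_greatest) auto

lemma ray_infimum_le_self:
  assumes "sublinear p" and "c \<le> p w"
  shows "ray_infimum p w c y \<le> p y"
  using ray_infimum_le[OF assms, of 0 y] by simp

lemma ray_infimum_add:
  assumes p: "sublinear p" and c: "c \<le> p w"
  shows "ray_infimum p w c (y1 + y2) \<le> ray_infimum p w c y1 + ray_infimum p w c y2"
proof -
  let ?S = "ray_infimum p w c"
  have "?S (y1 + y2) - (p (y2 + t2 *\<^sub>R w) - t2 * c) \<le> ?S y1" if t2: "t2 \<ge> 0" for t2
  proof (rule ray_infimum_greatest)
    fix t1 :: real assume t1: "t1 \<ge> 0"
    have "?S (y1 + y2) \<le> p ((y1 + y2) + (t1 + t2) *\<^sub>R w) - (t1 + t2) * c"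
      using ray_infimum_le[OF p c] t1 t2 by simp
    also have "p ((y1 + y2) + (t1 + t2) *\<^sub>R w) \<le> p (y1 + t1 *\<^sub>R w) + p (y2 + t2 *\<^sub>R w)"
      using sublinear_add[OF p, of "y1 + t1 *\<^sub>R w" "y2 + t2 *\<^sub>R w"]
      by (simp add: algebra_simps scaleR_add_left)
    finally show "?S (y1 + y2) - (p (y2 + t2 *\<^sub>R w) - t2 * c) \<le> p (y1 + t1 *\<^sub>R w) - t1 * c"
      by (simp add: algebra_simps)
  qed
  then have "?S (y1 + y2) - ?S y1 \<le> ?S y2"
    by (intro ray_infimum_greatest) (auto simp: algebra_simps)
  then show ?thesis by simp
qed

lemma ray_infimum_scaleR:
  assumes p: "sublinear p" and c: "c \<le> p w" and l: "0 < l"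
  shows "ray_infimum p w c (l *\<^sub>R y) = l * ray_infimum p w c y"
proof -
  let ?S = "ray_infimum p w c"
  have "?S (l *\<^sub>R y) / l \<le> ?S y"
  proof (rule ray_infimum_greatest)
    fix s :: real assume s: "s \<ge> 0"
    have "?S (l *\<^sub>R y) \<le> p (l *\<^sub>R y + (l * s) *\<^sub>R w) - (l * s) * c"
      using ray_infimum_le[OF p c] s l by simp
    also have "p (l *\<^sub>R y + (l * s) *\<^sub>R w) = l * p (y + s *\<^sub>R w)"
      using sublinear_scaleR[OF p l, of "y + s *\<^sub>R w"] by (simp add: scaleR_add_right)
    finally show "?S (l *\<^sub>R y) / l \<le> p (y + s *\<^sub>R w) - s * c"
      using l by (simp add: field_simps)
  qed
  moreover have "l * ?S y \<le> ?S (l *\<^sub>R y)"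
  proof (rule ray_infimum_greatest)
    fix t :: real assume t: "t \<ge> 0"
    have "?S y \<le> p (y + (t / l) *\<^sub>R w) - (t / l) * c"
      using ray_infimum_le[OF p c, of "t / l" y] t l by simp
    then have "l * ?S y \<le> l * (p (y + (t / l) *\<^sub>R w) - (t / l) * c)"
      using l by (simp add: mult_left_mono)
    also have "\<dots> = l * p (y + (t / l) *\<^sub>R w) - t * c"
      using l by (simp add: right_diff_distrib)
    also have "l * p (y + (t / l) *\<^sub>R w) = p (l *\<^sub>R y + t *\<^sub>R w)"
      using sublinear_scaleR[OF p l, of "y + (t / l) *\<^sub>R w"] l by (simp add: scaleR_add_right)
    finally show "l * ?S y \<le> p (l *\<^sub>R y + t *\<^sub>R w) - t * c" .
  qed
  ultimately show ?thesis
    using l by (simp add: field_simps)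
qed

lemma sublinear_ray_infimum:
  assumes "sublinear p" and "c \<le> p w"
  shows "sublinear (ray_infimum p w c)"
  unfolding sublinear_def using ray_infimum_add[OF assms] ray_infimum_scaleR[OF assms] by blast

lemma sublinear_chain_INF:
  assumes chain: "\<And>p q. p \<in> P \<Longrightarrow> q \<in> P \<Longrightarrow> (\<forall>y. p y \<le> q y) \<or> (\<forall>y. q y \<le> p y)"
    and nonempty: "P \<noteq> {}" and sub: "\<And>p. p \<in> P \<Longrightarrow> sublinear p"
    and bdd: "\<And>y. bdd_below ((\<lambda>p. p y) ` P)"
  shows "sublinear (\<lambda>y. INF p\<in>P. p y)"
proof -
  define u where "u y = (INF p\<in>P. p y)" for y
  have u_le: "u y \<le> p y" if "p \<in> P" for p y
    unfolding u_def using that bdd by (intro cINF_lower) auto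
  have u_ge: "a \<le> u y" if "\<And>p. p \<in> P \<Longrightarrow> a \<le> p y" for a y
    unfolding u_def using that nonempty by (intro cINF_greatest) auto
  have "u (x + y) \<le> u x + u y" for x y
  proof -
    have "u (x + y) - q y \<le> u x" if q: "q \<in> P" for q
    proof (rule u_ge)
      fix p assume p: "p \<in> P"
      obtain r where r: "r \<in> P" "\<forall>z. r z \<le> p z" "\<forall>z. r z \<le> q z"
        using chain[OF p q] p q by blast
      have "u (x + y) \<le> r (x + y)" using u_le[OF r(1)] .
      also have "\<dots> \<le> r x + r y" using sublinear_add[OF sub[OF r(1)]] .
      also have "\<dots> \<le> p x + q y" using r by (simp add: add_mono)
      finally show "u (x + y) - q y \<le> p x" by simp
    qed
    then have "u (x + y) - u x \<le> u y" by (intro u_ge) (auto simp: algebra_simps)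
    then show ?thesis by simp
  qed
  moreover have "u (c *\<^sub>R x) = c * u x" if c: "0 < c" for c x
  proof -
    have "u (c *\<^sub>R x) / c \<le> u x"
    proof (rule u_ge)
      fix p assume p: "p \<in> P"
      have "u (c *\<^sub>R x) \<le> c * p x" using u_le[OF p, of "c *\<^sub>R x"] sublinear_scaleR[OF sub[OF p] c] by simp
      then show "u (c *\<^sub>R x) / c \<le> p x" using c by (simp add: field_simps)
    qed
    moreover have "c * u x \<le> u (c *\<^sub>R x)"
    proof (rule u_ge)
      fix p assume p: "p \<in> P"
      have "c * u x \<le> c * p x" using u_le[OF p] c by (simp add: mult_left_mono)
      then show "c * u x \<le> p (c *\<^sub>R x)" using sublinear_scaleR[OF sub[OF p] c] by simp
    qed
    ultimately show ?thesis using c by (simp add: field_simps)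
  qed
  ultimately have "sublinear u" unfolding sublinear_def by blast
  then show ?thesis by (simp add: u_def[abs_def])
qed

lemma exists_minimal_sublinear_below:
  fixes p :: "'a::real_vector \<Rightarrow> real"
  assumes p: "sublinear p"
  shows "\<exists>m. sublinear m \<and> (\<forall>y. m y \<le> p y) \<and>
           (\<forall>q. sublinear q \<and> (\<forall>y. q y \<le> m y) \<longrightarrow> q = m)"
proof -
  define S where "S = {q. sublinear q \<and> (\<forall>y. q y \<le> p y)}"
  define r where "r = {(q1, q2). q1 \<in> S \<and> q2 \<in> S \<and> (\<forall>y. q2 y \<le> q1 y)}"
  have field_r: "Field r = S" unfolding r_def Field_def by auto
  have lower: "- p (- y) \<le> q y" if "q \<in> S" for q y
  proof -
    have "sublinear q" "q (- y) \<le> p (- y)" using that unfolding S_def by auto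
    then show ?thesis using sublinear_uminus_le[of q y] by linarith
  qed
  have "Partial_order r"
    unfolding partial_order_on_def preorder_on_def refl_on_def trans_def antisym_def field_r
    by (auto simp: r_def intro!: ext intro: order.trans order.antisym)
  moreover have "\<exists>u\<in>Field r. \<forall>q\<in>P. (q, u) \<in> r" if P: "P \<in> Chains r" for P
  proof (cases "P = {}")
    case True then show ?thesis using p field_r unfolding S_def by auto
  next
    case False
    have PS: "P \<subseteq> S" using P unfolding Chains_def r_def by auto
    let ?u = "\<lambda>y. INF q\<in>P. q y"
    have bdd: "bdd_below ((\<lambda>q. q y) ` P)" for y
      using lower PS by (intro bdd_belowI2[where m="- p (- y)"]) auto
    have u_le: "?u y \<le> q y" if "q \<in> P" for q y
      using that bdd by (intro cINF_lower) auto
    have "sublinear ?u"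
      using P PS False bdd unfolding Chains_def r_def S_def by (intro sublinear_chain_INF) auto
    moreover have "?u y \<le> p y" for y
      using False u_le PS unfolding S_def by (force intro: order.trans)
    ultimately have "?u \<in> S" unfolding S_def by auto
    then show ?thesis using field_r PS u_le unfolding r_def by blast
  qed
  ultimately obtain m where m: "m \<in> S" and m_min: "\<forall>q\<in>S. (m, q) \<in> r \<longrightarrow> q = m"
    using Zorns_po_lemma[of r] field_r by blast
  show ?thesis
  proof (intro exI conjI allI impI)
    show "sublinear m" "m y \<le> p y" for y using m unfolding S_def by auto
    fix q assume q: "sublinear q \<and> (\<forall>y. q y \<le> m y)"
    then have "q \<in> S" using m unfolding S_def by (auto intro: order.trans)
    then show "q = m" using m_min q m unfolding r_def by auto
  qed
qed

lemma minimal_sublinear_linear: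
  fixes m :: "'a::real_vector \<Rightarrow> real"
  assumes m: "sublinear m" and m_min: "\<forall>q. sublinear q \<and> (\<forall>y. q y \<le> m y) \<longrightarrow> q = m"
  shows "linear m"
proof -
  have add: "m (x + y) = m x + m y" for x y
  proof -
    have "ray_infimum m x (m x) = m"
      using m_min sublinear_ray_infimum[OF m, of "m x" x] ray_infimum_le_self[OF m, of "m x" x] by auto
    then have "m y \<le> m (y + 1 *\<^sub>R x) - 1 * m x"
      using ray_infimum_le[OF m, of "m x" x 1 y] by simp
    then show ?thesis using sublinear_add[OF m, of x y] by (simp add: add.commute)
  qed
  have scale: "m (c *\<^sub>R x) = c * m x" for c x
  proof (cases "0 \<le> c")
    case True then show ?thesis using sublinear_scaleR_nonneg[OF m] by blast
  next
    case False
    have "m (- (c *\<^sub>R x)) = - c * m x" using sublinear_scaleR_nonneg[OF m, of "- c" x] False by simp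
    moreover have "m (- (c *\<^sub>R x)) = - m (c *\<^sub>R x)"
      using add[of "c *\<^sub>R x" "- (c *\<^sub>R x)"] sublinear_zero[OF m] by simp
    ultimately show ?thesis by simp
  qed
  show ?thesis by (intro linearI add) (simp add: scale)
qed

theorem hahn_banach_sublinear:
  fixes p :: "'a::real_vector \<Rightarrow> real"
  assumes p: "sublinear p" and w: "1 \<le> p w"
  shows "\<exists>g. linear g \<and> (\<forall>y. g y \<le> p y) \<and> 1 \<le> g w"
proof -
  obtain m where m: "sublinear m" and m_le: "\<forall>y. m y \<le> ray_infimum p w 1 y"
    and m_min: "\<forall>q. sublinear q \<and> (\<forall>y. q y \<le> m y) \<longrightarrow> q = m"
    using exists_minimal_sublinear_below[OF sublinear_ray_infimum[OF p w]] by blast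
  have lin: "linear m" using minimal_sublinear_linear[OF m m_min] .
  have "m y \<le> p y" for y using m_le ray_infimum_le_self[OF p w] order.trans by blast
  moreover have "m (- w) \<le> -1"
    using m_le[rule_format, of "-w"] ray_infimum_le[OF p w, of 1 "-w"] sublinear_zero[OF p] by simp
  then have "1 \<le> m w" using linear_neg[OF lin, of w] by simp
  ultimately show ?thesis using lin by blast
qed

section \<open>Separation in locally convex spaces\<close>

lemma lc_tvs_continuous_translation:
  assumes "lc_tvs TYPE('z::{real_vector,t2_space})"
  shows "continuous_on UNIV (\<lambda>x::'z. z + x)"
proof -
  have "continuous_on UNIV (\<lambda>p::'z \<times> 'z. fst p + snd p)" using assms unfolding lc_tvs_def by blast
  then have "continuous_on UNIV (\<lambda>x. (\<lambda>p::'z \<times> 'z. fst p + snd p) (z, x))"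
    by (rule continuous_on_compose2) (auto intro!: continuous_intros)
  then show ?thesis by simp
qed

lemma lc_tvs_continuous_scaleR:
  assumes "lc_tvs TYPE('z::{real_vector,t2_space})"
    and "continuous_on UNIV f" and "continuous_on UNIV (g :: 'a::topological_space \<Rightarrow> 'z)"
  shows "continuous_on UNIV (\<lambda>x. f x *\<^sub>R g x)"
proof -
  have "continuous_on UNIV (\<lambda>p::real \<times> 'z. fst p *\<^sub>R snd p)" using assms(1) unfolding lc_tvs_def by blast
  then have "continuous_on UNIV (\<lambda>x. (\<lambda>p::real \<times> 'z. fst p *\<^sub>R snd p) (f x, g x))"
    by (rule continuous_on_compose2) (auto intro!: continuous_intros assms(2,3))
  then show ?thesis by simp
qed

lemma lc_tvs_continuous_affine:
  assumes lc: "lc_tvs TYPE('z::{real_vector,t2_space})"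
  shows "continuous_on UNIV (\<lambda>x::'z. c *\<^sub>R (z + x))"
  using lc_tvs_continuous_scaleR[OF lc continuous_on_const lc_tvs_continuous_translation[OF lc]] .

lemma lc_tvs_continuous_line:
  assumes lc: "lc_tvs TYPE('z::{real_vector,t2_space})"
  shows "continuous_on UNIV (\<lambda>t::real. z + t *\<^sub>R (v::'z))"
  using continuous_on_compose2[OF lc_tvs_continuous_translation[OF lc, of z]
      lc_tvs_continuous_scaleR[OF lc continuous_on_id continuous_on_const]]
  by simp

lemma lc_tvs_line_in_open:
  assumes lc: "lc_tvs TYPE('z::{real_vector,t2_space})" and U: "open U" "z \<in> U"
  shows "\<exists>d>0. \<forall>t. \<bar>t\<bar> < d \<longrightarrow> z + t *\<^sub>R (v::'z) \<in> U"
proof -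
  let ?h = "\<lambda>t::real. z + t *\<^sub>R v"
  have "isCont ?h 0" using lc_tvs_continuous_line[OF lc, of z v] by (simp add: continuous_on_eq_continuous_at)
  then have "\<forall>\<^sub>F t in at 0. ?h t \<in> U" using U by (simp add: continuous_at topological_tendstoD)
  then obtain d where d: "d > 0" "\<forall>t. t \<noteq> 0 \<and> dist t 0 < d \<longrightarrow> ?h t \<in> U"
    unfolding eventually_at by auto
  have "?h t \<in> U" if "\<bar>t\<bar> < d" for t
    using U(2) d(2) that by (cases "t = 0") (auto simp: dist_real_def)
  then show ?thesis using d(1) by blast
qed

definition minkowski_functional :: "'z::real_vector set \<Rightarrow> 'z \<Rightarrow> real" where
  "minkowski_functional D y = Inf {l. 0 < l \<and> inverse l *\<^sub>R y \<in> D}"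

context
  fixes D :: "'z::{real_vector,t2_space} set"
  assumes lc: "lc_tvs TYPE('z)" and D: "open D" "convex D" "0 \<in> D"
begin

private lemma absorbing: "\<exists>l>0. inverse l *\<^sub>R y \<in> D"
proof -
  obtain d where d: "d > 0" "\<forall>t. \<bar>t\<bar> < d \<longrightarrow> 0 + t *\<^sub>R y \<in> D"
    using lc_tvs_line_in_open[OF lc D(1,3), of y] by blast
  then have "inverse (2 / d) *\<^sub>R y \<in> D" by simp
  then show ?thesis using d(1) by (intro exI[of _ "2 / d"]) simp
qed

lemma minkowski_functional_nonneg: "0 \<le> minkowski_functional D y"
  unfolding minkowski_functional_def using absorbing[of y] by (intro cInf_greatest) auto

lemma minkowski_functional_le: "0 < l \<Longrightarrow> inverse l *\<^sub>R y \<in> D \<Longrightarrow> minkowski_functional D y \<le> l"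
  unfolding minkowski_functional_def by (rule cInf_lower) (auto intro: bdd_belowI[of _ 0])

lemma minkowski_functional_less_imp_mem:
  assumes "minkowski_functional D y < l"
  shows "inverse l *\<^sub>R y \<in> D"
proof -
  have "{l. 0 < l \<and> inverse l *\<^sub>R y \<in> D} \<noteq> {}" using absorbing[of y] by blast
  from cInf_lessD[OF this assms[unfolded minkowski_functional_def]]
  obtain m where m: "0 < m" "inverse m *\<^sub>R y \<in> D" "m < l" by blast
  have "(m / l) *\<^sub>R (inverse m *\<^sub>R y) + (1 - m / l) *\<^sub>R 0 \<in> D"
    by (rule convexD[OF D(2) m(2) D(3)]) (use m in auto)
  moreover have "(m / l) *\<^sub>R (inverse m *\<^sub>R y) = inverse l *\<^sub>R y" using m by (auto simp: field_simps)
  ultimately show ?thesis by (simp only: scaleR_zero_right add_0_right)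
qed

lemma minkowski_functional_less_one: "y \<in> D \<Longrightarrow> minkowski_functional D y < 1"
proof -
  assume "y \<in> D"
  then obtain d where d: "d > 0" "\<forall>t. \<bar>t\<bar> < d \<longrightarrow> y + t *\<^sub>R y \<in> D"
    using lc_tvs_line_in_open[OF lc D(1)] by blast
  have "y + (d/2) *\<^sub>R y \<in> D" using d by simp
  moreover have "y + (d/2) *\<^sub>R y = inverse (inverse (1 + d/2)) *\<^sub>R y" by (simp add: algebra_simps)
  ultimately have "inverse (inverse (1 + d/2)) *\<^sub>R y \<in> D" by simp
  then have "minkowski_functional D y \<le> inverse (1 + d/2)"
    using d(1) by (intro minkowski_functional_le) simp_all
  also have "\<dots> < 1" using d by (simp add: field_simps)
  finally show ?thesis .
qed

lemma minkowski_functional_ge_one: "y \<notin> D \<Longrightarrow> 1 \<le> minkowski_functional D y"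
  using minkowski_functional_less_imp_mem[of y 1] by fastforce

lemma minkowski_functional_add:
  "minkowski_functional D (x + y) \<le> minkowski_functional D x + minkowski_functional D y"
proof -
  let ?p = "minkowski_functional D"
  have "?p (x + y) \<le> a + b" if a: "?p x < a" and b: "?p y < b" for a b
  proof -
    have ab: "a > 0" "b > 0" using a b minkowski_functional_nonneg[of x] minkowski_functional_nonneg[of y] by auto
    then have "0 \<le> a / (a + b)" "0 \<le> 1 - a / (a + b)" by (auto simp: field_simps)
    then have "(a / (a + b)) *\<^sub>R (inverse a *\<^sub>R x) + (1 - a / (a + b)) *\<^sub>R (inverse b *\<^sub>R y) \<in> D"
      by (intro convexD[OF D(2) minkowski_functional_less_imp_mem[OF a] minkowski_functional_less_imp_mem[OF b]])
        simp_all
    moreover have "(a / (a + b)) *\<^sub>R (inverse a *\<^sub>R x) + (1 - a / (a + b)) *\<^sub>R (inverse b *\<^sub>R y)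
        = inverse (a + b) *\<^sub>R (x + y)"
      using ab by (simp add: field_simps scaleR_add_right)
    ultimately show ?thesis using ab by (intro minkowski_functional_le) auto
  qed
  note sum_le = this
  have "?p (x + y) - b \<le> ?p x" if b: "?p y < b" for b
  proof (rule dense_ge)
    fix a assume "?p x < a"
    then show "?p (x + y) - b \<le> a" using sum_le[of a b] b by linarith
  qed
  then have "?p (x + y) - ?p x \<le> b" if "?p y < b" for b
    using that by (simp add: algebra_simps)
  then have "?p (x + y) - ?p x \<le> ?p y" by (rule dense_ge)
  then show ?thesis by simp
qed

lemma minkowski_functional_scaleR:
  assumes c: "0 < c"
  shows "minkowski_functional D (c *\<^sub>R y) = c * minkowski_functional D y"
proof -
  let ?p = "minkowski_functional D"
  have "?p (c *\<^sub>R y) \<le> c * a" if "?p y < a" for a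
  proof -
    have "a > 0" using that minkowski_functional_nonneg[of y] by auto
    moreover have "inverse (c * a) *\<^sub>R (c *\<^sub>R y) = inverse a *\<^sub>R y" using c by simp
    then have "inverse (c * a) *\<^sub>R (c *\<^sub>R y) \<in> D"
      using minkowski_functional_less_imp_mem[OF that] by (simp only:)
    ultimately show ?thesis using c by (intro minkowski_functional_le) auto
  qed
  then have "?p (c *\<^sub>R y) / c \<le> a" if "?p y < a" for a
    using that c by (simp add: divide_le_eq mult.commute)
  then have "?p (c *\<^sub>R y) / c \<le> ?p y" by (rule dense_ge)
  moreover have "c * ?p y \<le> a" if "?p (c *\<^sub>R y) < a" for a
  proof -
    have "a > 0" using that minkowski_functional_nonneg[of "c *\<^sub>R y"] by auto
    moreover have "inverse (a / c) *\<^sub>R y = inverse a *\<^sub>R (c *\<^sub>R y)" by (simp add: field_simps)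
    then have "inverse (a / c) *\<^sub>R y \<in> D"
      using minkowski_functional_less_imp_mem[OF that] by (simp only:)
    ultimately have "?p y \<le> a / c" using c by (intro minkowski_functional_le) auto
    then show ?thesis using c by (simp add: field_simps)
  qed
  then have "c * ?p y \<le> ?p (c *\<^sub>R y)" by (rule dense_ge)
  ultimately show ?thesis using c by (simp add: field_simps)
qed

lemma sublinear_minkowski_functional: "sublinear (minkowski_functional D)"
  unfolding sublinear_def using minkowski_functional_add minkowski_functional_scaleR by blast

end

lemma linear_continuous_if_bounded_on_open:
  fixes g :: "'z::{real_vector,t2_space} \<Rightarrow> real"
  assumes lc: "lc_tvs TYPE('z)" and g: "linear g"
    and D: "open D" "0 \<in> D" and bound: "\<And>y. y \<in> D \<Longrightarrow> g y < 1"
  shows "continuous_on UNIV g"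
  unfolding continuous_on_open_invariant
proof (intro allI impI)
  fix V :: "real set" assume V: "open V"
  have "\<exists>N. open N \<and> y \<in> N \<and> N \<subseteq> g -` V" if y: "y \<in> g -` V" for y
  proof -
    obtain e where e: "e > 0" "ball (g y) e \<subseteq> V" using V y open_contains_ball by blast
    define N where "N = (\<lambda>z. inverse e *\<^sub>R (- y + z)) -` D \<inter> (\<lambda>z. (- inverse e) *\<^sub>R (- y + z)) -` D"
    have "open N" unfolding N_def
      by (intro open_Int open_vimage[OF D(1) lc_tvs_continuous_affine[OF lc]])
    moreover have "y \<in> N" unfolding N_def using D(2) by simp
    moreover have "N \<subseteq> g -` V"
    proof
      fix z assume "z \<in> N"
      then have "g (inverse e *\<^sub>R (- y + z)) < 1" "g ((- inverse e) *\<^sub>R (- y + z)) < 1"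
        using bound unfolding N_def by auto
      then have "inverse e * (g z - g y) < 1" "- inverse e * (g z - g y) < 1"
        by (simp_all only: linear_scale[OF g] linear_add[OF g] linear_neg[OF g]) (simp_all add: algebra_simps)
      then have "\<bar>g z - g y\<bar> < e" using e by (auto simp: field_simps abs_less_iff)
      then show "z \<in> g -` V" using e(2) by (auto simp: dist_real_def)
    qed
    ultimately show ?thesis by blast
  qed
  then have "open (g -` V)" by (subst open_subopen) blast
  then show "\<exists>A. open A \<and> A \<inter> UNIV = g -` V \<inter> UNIV" by auto
qed

text \<open>The Minkowski functional of the open convex set (b0 - z0) + (U - B), which contains 0 but not
  b0 - z0, dominates a linear functional that is at least 1 at b0 - z0.\<close>

lemma separation_open_convex:
  fixes U B :: "'z::{real_vector,t2_space} set"
  assumes lc: "lc_tvs TYPE('z)" and B: "convex B" "b0 \<in> B"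
    and U: "open U" "convex U" "z0 \<in> U" and disj: "U \<inter> B = {}"
  shows "\<exists>(g::'z \<Rightarrow> real) e. linear g \<and> continuous_on UNIV g \<and> e > 0 \<and> (\<forall>b\<in>B. g z0 + e \<le> g b)"
proof -
  define w where "w = b0 - z0"
  define D where "D = (+) w ` (\<Union>u\<in>U. \<Union>b\<in>B. {u - b})"
  have D_iff: "y \<in> D \<longleftrightarrow> (\<exists>u\<in>U. \<exists>b\<in>B. y = w + (u - b))" for y
    unfolding D_def by blast
  have "0 \<in> D" using U(3) B(2) unfolding D_iff w_def by force
  moreover have "w \<notin> D" using disj unfolding D_iff by auto
  moreover have "y \<in> D \<longleftrightarrow> (\<exists>b\<in>B. (b - w) + y \<in> U)" for y
  proof
    assume "y \<in> D"
    then obtain u b where "u \<in> U" "b \<in> B" "y = w + (u - b)" unfolding D_iff by blast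
    then show "\<exists>b\<in>B. (b - w) + y \<in> U" by (intro bexI[of _ b]) simp_all
  next
    assume "\<exists>b\<in>B. (b - w) + y \<in> U"
    then obtain b where "b \<in> B" "(b - w) + y \<in> U" by blast
    then show "y \<in> D" unfolding D_iff by (intro bexI[of _ "(b - w) + y"] bexI[of _ b]) simp_all
  qed
  then have "D = (\<Union>b\<in>B. (\<lambda>x. (b - w) + x) -` U)" by blast
  then have "open D"
    by (auto intro!: open_UN open_vimage[OF U(1) lc_tvs_continuous_translation[OF lc]])
  moreover have "convex D"
    unfolding D_def by (intro convex_translation convex_differences U(2) B(1))
  ultimately have D: "open D" "convex D" "0 \<in> D" "w \<notin> D" by blast+
  obtain g where g: "linear g" "\<forall>y. g y \<le> minkowski_functional D y" "1 \<le> g w"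
    using hahn_banach_sublinear[OF sublinear_minkowski_functional minkowski_functional_ge_one]
      lc D by blast
  have g_less: "g y < 1" if "y \<in> D" for y
    using g(2) minkowski_functional_less_one[OF lc D(1-3) that] by (meson le_less_trans)
  have g_cont: "continuous_on UNIV g"
    by (rule linear_continuous_if_bounded_on_open[OF lc g(1) D(1,3) g_less])
  obtain d where d: "d > 0" "\<forall>t. \<bar>t\<bar> < d \<longrightarrow> z0 + t *\<^sub>R w \<in> U"
    using lc_tvs_line_in_open[OF lc U(1,3), of w] by blast
  have "g z0 + d / 2 \<le> g b" if b: "b \<in> B" for b
  proof -
    have "w + ((z0 + (d/2) *\<^sub>R w) - b) \<in> D" using d b unfolding D_iff by auto
    then have "g (w + ((z0 + (d/2) *\<^sub>R w) - b)) < 1" by (rule g_less)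
    moreover have "g (w + ((z0 + (d/2) *\<^sub>R w) - b)) = g z0 + (d/2) * g w - g b + g w"
      by (simp add: linear_add[OF g(1)] linear_diff[OF g(1)] linear_scale[OF g(1)])
    ultimately have "g z0 + (d/2) * g w < g b" using g(3) by linarith
    moreover have "d / 2 \<le> (d/2) * g w" using g(3) d by simp
    ultimately show ?thesis by linarith
  qed
  then show ?thesis using g(1) g_cont d(1) by (intro exI[of _ g] exI[of _ "d / 2"]) auto
qed

section \<open>Scalarization\<close>

lemma phi_le: "z \<in> f x \<Longrightarrow> phi f zs x \<le> ereal (- zs z)"
  unfolding phi_def by (rule INF_lower2) auto

lemma phi_less_iff: "phi f zs x < c \<longleftrightarrow> (\<exists>z\<in>f x. ereal (- zs z) < c)"
  unfolding phi_def by (simp add: INF_less_iff)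

lemma phi_antimono: "f u \<subseteq> f v \<Longrightarrow> phi f zs v \<le> phi f zs u"
  unfolding phi_def by (rule INF_superset_mono) auto

lemma phi_empty: "f x = {} \<Longrightarrow> phi f zs x = \<infinity>"
  unfolding phi_def by (simp add: top_ereal_def)

lemma phi_less_PInf:
  assumes "f x \<noteq> {}" shows "phi f zs x < \<infinity>"
proof -
  obtain z where "z \<in> f x" using assms by blast
  then have "phi f zs x \<le> ereal (- zs z)" by (rule phi_le)
  then show ?thesis by (rule order.strict_trans1) simp
qed

lemma ediff_PInf: "ediff r \<infinity> = - \<infinity>"
  unfolding ediff_def by (rule ereal_bot) (auto intro: Inf_lower)

lemma ediff_less_zero_iff: "ediff r (ereal q) < 0 \<longleftrightarrow> r < ereal q"
proof
  assume "ediff r (ereal q) < 0"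
  then obtain t where t: "r \<le> ereal q + ereal t" "t < 0"
    unfolding ediff_def by (auto simp: INF_less_iff)
  have "ereal q + ereal t < ereal q" using t(2) by simp
  then show "r < ereal q" by (rule order.strict_trans1[OF t(1)])
next
  assume "r < ereal q"
  then obtain p where p: "r < ereal p" "ereal p < ereal q" using ereal_dense2 by blast
  then have "ediff r (ereal q) \<le> ereal (p - q)" unfolding ediff_def by (intro Inf_lower) auto
  also have "\<dots> < 0" using p by simp
  finally show "ediff r (ereal q) < 0" .
qed

lemma ereal_mult_pos_less_zero_iff: "0 < c \<Longrightarrow> ereal c * e < 0 \<longleftrightarrow> e < 0"
  by (cases e) (auto simp: mult_less_0_iff)

lemma phi_dir_le:
  "0 < t \<Longrightarrow> phi_dir f zs x u \<le> ereal (1 / t) * ediff (phi f zs (x + t *\<^sub>R u)) (phi f zs x)"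
  unfolding phi_dir_def by (rule INF_lower) auto

lemma phi_dir_less_zero_imp_descent:
  assumes "phi_dir f zs x u < 0" and "phi f zs x = ereal p"
  shows "\<exists>t>0. phi f zs (x + t *\<^sub>R u) < phi f zs x"
proof -
  obtain t where "t > 0" "ereal (1 / t) * ediff (phi f zs (x + t *\<^sub>R u)) (phi f zs x) < 0"
    using assms(1) unfolding phi_dir_def by (auto simp: INF_less_iff)
  then show ?thesis using assms(2) by (auto simp: ereal_mult_pos_less_zero_iff ediff_less_zero_iff)
qed

lemma sv_convex_mem:
  assumes "sv_convex f" and "0 < l" "l < 1" and "a \<in> f u" "b \<in> f v"
  shows "l *\<^sub>R a + (1 - l) *\<^sub>R b \<in> f (l *\<^sub>R u + (1 - l) *\<^sub>R v)"
proof -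
  have "l *\<^sub>R a + (1 - l) *\<^sub>R b \<in> sum_set ((\<lambda>z. l *\<^sub>R z) ` f u) ((\<lambda>z. (1 - l) *\<^sub>R z) ` f v)"
    unfolding sum_set_def using assms(4,5) by blast
  then show ?thesis
    using assms(1-3) closure_subset unfolding sv_convex_def oplus_set_def by blast
qed

lemma phi_convex:
  assumes f: "sv_convex f" and zs: "linear zs" and l: "0 < l" "l < 1"
    and u: "phi f zs u < ereal r1" and v: "phi f zs v \<le> ereal r2"
  shows "phi f zs (l *\<^sub>R u + (1 - l) *\<^sub>R v) < ereal (l * r1 + (1 - l) * r2)"
proof -
  obtain r1' where r1': "phi f zs u < ereal r1'" "r1' < r1" using ereal_dense2[OF u] by auto
  define e where "e = l * (r1 - r1') / (1 - l)"
  have e: "e > 0" using l r1' unfolding e_def by auto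
  have "phi f zs v < ereal (r2 + e)" using e by (intro order.strict_trans1[OF v]) simp
  then obtain b where b: "b \<in> f v" "- zs b < r2 + e" unfolding phi_less_iff by auto
  obtain a where a: "a \<in> f u" "- zs a < r1'" using r1'(1) unfolding phi_less_iff by auto
  have "phi f zs (l *\<^sub>R u + (1 - l) *\<^sub>R v) \<le> ereal (- zs (l *\<^sub>R a + (1 - l) *\<^sub>R b))"
    by (rule phi_le[where f=f, OF sv_convex_mem[OF f l a(1) b(1)]])
  also have "- zs (l *\<^sub>R a + (1 - l) *\<^sub>R b) = l * (- zs a) + (1 - l) * (- zs b)"
    using linear_add[OF zs] linear_scale[OF zs] by simp
  also have "\<dots> < l * r1' + (1 - l) * (r2 + e)"
    using a b l by (intro add_less_le_mono mult_strict_left_mono mult_left_mono) auto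
  also have "\<dots> = l * r1 + (1 - l) * r2" using l unfolding e_def by (simp add: field_simps)
  finally show ?thesis by simp
qed

lemma phi_less_imp_phi_dir_neg:
  assumes f: "sv_convex f" and zs: "linear zs"
    and less: "phi f zs x0 < phi f zs x" and fin: "phi f zs x < \<infinity>"
  shows "phi f zs x \<noteq> -\<infinity> \<and> phi_dir f zs x (x0 - x) < 0"
proof -
  obtain p where p: "phi f zs x = ereal p" using less fin by (cases "phi f zs x") auto
  obtain r where r: "phi f zs x0 < ereal r" "r < p" using ereal_dense2[OF less] p by auto
  have comb: "x + l *\<^sub>R (x0 - x) = l *\<^sub>R x0 + (1 - l) *\<^sub>R x" for l :: real
    by (simp add: algebra_simps)
  have "phi f zs (x + (1/2) *\<^sub>R (x0 - x)) < ereal ((1/2) * r + (1 - 1/2) * p)"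
    unfolding comb by (rule phi_convex[OF f zs _ _ r(1)]) (auto simp: p)
  also have "ereal ((1/2) * r + (1 - 1/2) * p) < ereal p" using r(2) by simp
  finally have "ediff (phi f zs (x + (1/2) *\<^sub>R (x0 - x))) (phi f zs x) < 0"
    unfolding p ediff_less_zero_iff .
  then have "ereal (1 / (1/2)) * ediff (phi f zs (x + (1/2) *\<^sub>R (x0 - x))) (phi f zs x) < 0"
    by (simp add: ereal_mult_pos_less_zero_iff)
  then have "phi_dir f zs x (x0 - x) < 0"
    by (rule order.strict_trans1[OF phi_dir_le, rotated]) simp
  then show ?thesis using p by simp
qed

section \<open>Minimality implies the scalarized Minty inequality\<close>

lemma linear_nonneg_on_cone:
  fixes g :: "'a::real_vector \<Rightarrow> real"
  assumes g: "linear g" and C: "cone C" and bound: "\<forall>c\<in>C. m \<le> g (b + c)" and c: "c \<in> C"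
  shows "0 \<le> g c"
proof (rule ccontr)
  assume "\<not> 0 \<le> g c"
  define t where "t = (g b - m + 1) / (- g c)"
  have "0 *\<^sub>R c \<in> C" using C c unfolding cone_def by blast
  then have "m \<le> g b" using bound by auto
  then have "t \<ge> 0" using \<open>\<not> 0 \<le> g c\<close> unfolding t_def by (intro divide_nonneg_pos) auto
  then have "m \<le> g (b + t *\<^sub>R c)" using bound C c unfolding cone_def by blast
  also have "g (b + t *\<^sub>R c) = g b + t * g c" using linear_add[OF g] linear_scale[OF g] by simp
  also have "t * g c = m - g b - 1" using \<open>\<not> 0 \<le> g c\<close> unfolding t_def by (simp add: field_simps)
  finally show False by simp
qed

lemma G_space_strict_separation:
  fixes C :: "'z::{real_vector,t2_space} set"
  assumes lc: "lc_tvs TYPE('z)" and C: "cone C" "0 \<in> C"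
    and A: "A \<in> G_space C" "A \<noteq> {}" and z0: "z0 \<notin> A"
  shows "\<exists>zs\<in>neg_dual_cone C. \<exists>e>0. \<forall>a\<in>A. zs a + e \<le> zs z0"
proof -
  define B where "B = convex hull (sum_set A C)"
  have A_eq: "A = closure B" using A(1) unfolding G_space_def B_def by simp
  have "open (- closure B)" "z0 \<in> - closure B" using z0 A_eq by auto
  then obtain U where U: "open U" "convex U" "z0 \<in> U" "U \<subseteq> - closure B"
    using lc unfolding lc_tvs_def by blast
  have sum_B: "a + c \<in> B" if "a \<in> A" "c \<in> C" for a c
    using that hull_subset[of "sum_set A C" convex] unfolding B_def sum_set_def by blast
  obtain b0 where b0: "b0 \<in> A" using A(2) by blast
  have "convex B" unfolding B_def by (rule convex_convex_hull)
  moreover have "b0 \<in> B" using sum_B[OF b0 C(2)] by simp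
  moreover have "U \<inter> B = {}" using U closure_subset by blast
  ultimately obtain g :: "'z \<Rightarrow> real" and e where g: "linear g" "continuous_on UNIV g" "e > 0"
    and g_B: "\<forall>b\<in>B. g z0 + e \<le> g b"
    using separation_open_convex[OF lc _ _ U(1-3), of B b0] by blast
  have "closed (g -` {g z0 + e..})" by (rule closed_vimage[OF closed_atLeast g(2)])
  then have "closure B \<subseteq> g -` {g z0 + e..}" using g_B by (intro closure_minimal) auto
  then have g_A: "g z0 + e \<le> g a" if "a \<in> A" for a using that A_eq by auto
  have "\<forall>c\<in>C. g z0 + e \<le> g (b0 + c)" using g_B sum_B[OF b0] by blast
  then have "0 \<le> g c" if "c \<in> C" for c
    using linear_nonneg_on_cone[OF g(1) C(1) _ that] by blast
  moreover have "linear (\<lambda>z. - g z)" using g(1) by (rule linear_compose_neg)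
  moreover have "continuous_on UNIV (\<lambda>z. - g z)" using g(2) by (rule continuous_on_minus)
  ultimately have "(\<lambda>z. - g z) \<in> neg_dual_cone C"
    unfolding neg_dual_cone_def top_dual_def by auto
  moreover have "\<forall>a\<in>A. - g a + e \<le> - g z0" using g_A by fastforce
  ultimately show ?thesis using g(3) by (intro bexI[of _ "\<lambda>z. - g z"] exI[of _ e]) auto
qed

lemma Min_value_imp_scalar_minty:
  fixes C :: "'z::{real_vector,t2_space} set" and f :: "'x::real_vector \<Rightarrow> 'z set"
  assumes lc: "lc_tvs TYPE('z)" and C: "cone C" "0 \<in> C"
    and C_dual: "neg_dual_cone C - {\<lambda>_. 0} \<noteq> {}"
    and f_G: "\<forall>x. f x \<in> G_space C" and f: "sv_convex f"
    and min: "is_Min_value f x0" and x: "f x \<noteq> f x0"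
  shows "\<exists>zs \<in> neg_dual_cone C - {\<lambda>_. 0}. phi f zs x \<noteq> -\<infinity> \<and> phi_dir f zs x (x0 - x) < 0"
proof (cases "f x = {}")
  case True
  obtain zs where zs: "zs \<in> neg_dual_cone C - {\<lambda>_. 0}" using C_dual by blast
  have "phi_dir f zs x (x0 - x) \<le> ereal (1 / 1) * ediff (phi f zs (x + 1 *\<^sub>R (x0 - x))) (phi f zs x)"
    by (rule phi_dir_le) simp
  then show ?thesis using zs by (intro bexI[of _ zs]) (simp_all add: phi_empty[where f=f, OF True] ediff_PInf)
next
  case False
  obtain z0 where z0: "z0 \<in> f x0" "z0 \<notin> f x" using min x unfolding is_Min_value_def by blast
  obtain zs e where zs: "zs \<in> neg_dual_cone C" "e > 0" and sep: "\<forall>a\<in>f x. zs a + e \<le> zs z0"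
    using G_space_strict_separation[OF lc C f_G[rule_format] False z0(2)] by blast
  have nonzero: "zs \<noteq> (\<lambda>_. 0)"
  proof
    assume "zs = (\<lambda>_. 0)"
    moreover obtain a where "a \<in> f x" using False by blast
    ultimately show False using sep zs(2) by force
  qed
  have less: "phi f zs x0 < phi f zs x"
  proof -
    have "phi f zs x0 \<le> ereal (- zs z0)" by (rule phi_le[where f=f, OF z0(1)])
    also have "\<dots> < ereal (- zs z0 + e)" using zs(2) by simp
    also have "\<dots> \<le> phi f zs x" unfolding phi_def using sep by (auto intro!: INF_greatest)
    finally show ?thesis .
  qed
  have "linear zs" using zs(1) unfolding neg_dual_cone_def top_dual_def by blast
  from phi_less_imp_phi_dir_neg[OF f this less phi_less_PInf[where f=f, OF False]]
  show ?thesis using zs(1) nonzero by blast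
qed

section \<open>The scalarized Minty inequality implies minimality\<close>

text \<open>Convexity of an extended-real valued function of one real variable, phrased through real
  upper bounds so that no arithmetic with infinite values occurs.\<close>

definition convex_ereal_fun :: "(real \<Rightarrow> ereal) \<Rightarrow> bool" where
  "convex_ereal_fun H \<longleftrightarrow> (\<forall>l a b r1 r2. 0 < l \<and> l < 1 \<and> H a < ereal r1 \<and> H b \<le> ereal r2 \<longrightarrow>
     H (l * a + (1 - l) * b) < ereal (l * r1 + (1 - l) * r2))"

lemma convex_ereal_funD:
  "convex_ereal_fun H \<Longrightarrow> 0 < l \<Longrightarrow> l < 1 \<Longrightarrow> H a < ereal r1 \<Longrightarrow> H b \<le> ereal r2 \<Longrightarrow>
     H (l * a + (1 - l) * b) < ereal (l * r1 + (1 - l) * r2)"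
  unfolding convex_ereal_fun_def by blast

lemma convex_ereal_fun_phi_segment:
  assumes "sv_convex f" and "linear zs"
  shows "convex_ereal_fun (\<lambda>t. phi f zs (x0 + t *\<^sub>R (x - x0)))"
  unfolding convex_ereal_fun_def
proof (intro allI impI)
  fix l a b r1 r2 :: real assume "0 < l \<and> l < 1 \<and> phi f zs (x0 + a *\<^sub>R (x - x0)) < ereal r1 \<and>
      phi f zs (x0 + b *\<^sub>R (x - x0)) \<le> ereal r2"
  then have "phi f zs (l *\<^sub>R (x0 + a *\<^sub>R (x - x0)) + (1 - l) *\<^sub>R (x0 + b *\<^sub>R (x - x0)))
      < ereal (l * r1 + (1 - l) * r2)"
    using phi_convex[OF assms] by blast
  moreover have "l *\<^sub>R (x0 + a *\<^sub>R (x - x0)) + (1 - l) *\<^sub>R (x0 + b *\<^sub>R (x - x0))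
      = x0 + (l * a + (1 - l) * b) *\<^sub>R (x - x0)"
    by (simp add: algebra_simps)
  ultimately show "phi f zs (x0 + (l * a + (1 - l) * b) *\<^sub>R (x - x0)) < ereal (l * r1 + (1 - l) * r2)"
    by simp
qed

lemma convex_ereal_fun_le_max:
  assumes H: "convex_ereal_fun H" and s: "a < s" "s < b"
  shows "H s \<le> max (H a) (H b)"
proof (rule ccontr)
  assume "\<not> H s \<le> max (H a) (H b)"
  then obtain r where r: "max (H a) (H b) < ereal r" "ereal r < H s"
    using ereal_dense2 by (metis not_le)
  define l where "l = (b - s) / (b - a)"
  have l: "0 < l" "l < 1" using s unfolding l_def by (auto simp: field_simps)
  have "l * (b - a) = b - s" using s unfolding l_def by simp
  then have "l * a + (1 - l) * b = s" by (simp add: algebra_simps)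
  moreover have "H a < ereal r" "H b \<le> ereal r" using r(1) by auto
  ultimately have "H s < ereal (l * r + (1 - l) * r)"
    using convex_ereal_funD[OF H l, of a r b r] by simp
  then show False using r(2) by (simp add: algebra_simps)
qed

lemma convex_ereal_fun_less:
  assumes H: "convex_ereal_fun H" and s: "a < s" "s < b" and less: "H a < H b" and fin: "H b \<noteq> \<infinity>"
  shows "H s < H b"
proof -
  obtain hb where hb: "H b = ereal hb" using less fin by (cases "H b") auto
  obtain r where r: "H a < ereal r" "r < hb" using ereal_dense2[OF less] hb by auto
  define l where "l = (b - s) / (b - a)"
  have l: "0 < l" "l < 1" using s unfolding l_def by (auto simp: field_simps)
  have "l * (b - a) = b - s" using s unfolding l_def by simp
  then have "l * a + (1 - l) * b = s" by (simp add: algebra_simps)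
  then have "H s < ereal (l * r + (1 - l) * hb)"
    using convex_ereal_funD[OF H l r(1), of b hb] hb by simp
  also have "l * r + (1 - l) * hb < hb" using l r(2) by (simp add: algebra_simps)
  finally show ?thesis using hb by simp
qed

text \<open>A strict descent from s that overshoots 0 would, by convexity, make H(0) < H(s).\<close>

lemma convex_ereal_fun_descent_positive:
  assumes H: "convex_ereal_fun H" and s: "0 < s" and top: "H s \<le> H 0" "H 0 \<noteq> \<infinity>"
    and descent: "H t < H s" and t: "t < s"
  shows "0 < t"
proof (rule ccontr)
  assume "\<not> 0 < t"
  moreover have "H s \<noteq> \<infinity>" using top by auto
  ultimately have "H 0 < H s"
    using convex_ereal_fun_less[OF H _ s descent] descent by (cases "t = 0") auto
  then show False using top(1) by simp
qed

lemma convex_ereal_fun_no_descent_near_zero: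
  assumes H: "convex_ereal_fun H" and top: "\<And>s. 0 \<le> s \<Longrightarrow> s \<le> 1 \<Longrightarrow> H s \<le> H 0"
    and lsc: "lsc_at_pt (\<lambda>t. if t \<in> {0..1} then H t else \<infinity>) 0"
  shows "\<exists>\<delta>>0. \<forall>t s. 0 < t \<and> t < s \<and> s < \<delta> \<and> s \<le> 1 \<longrightarrow> H s \<le> H t"
proof (rule ccontr)
  assume "\<not> ?thesis"
  then have descent: "\<exists>t s. 0 < t \<and> t < s \<and> s < \<delta> \<and> s \<le> 1 \<and> H t < H s" if "\<delta> > 0" for \<delta>
    using that by (auto simp: not_le)
  obtain t1 s1 where ts1: "0 < t1" "t1 < s1" "s1 \<le> 1" "H t1 < H s1" using descent[of 1] by auto
  have "y < H t1" if y: "y < H 0" for y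
  proof -
    have "\<forall>\<^sub>F t in at 0. y < (if t \<in> {0..1} then H t else \<infinity>)"
      using lsc y unfolding lsc_at_pt_def by auto
    then obtain d where d: "d > 0" "\<forall>t. t \<noteq> 0 \<and> dist t 0 < d \<longrightarrow> y < (if t \<in> {0..1} then H t else \<infinity>)"
      unfolding eventually_at by auto
    obtain t s where ts: "0 < t" "t < s" "s < min d t1" "H t < H s"
      using descent[of "min d t1"] d(1) ts1(1) by auto
    have "y < H s" using d(2)[rule_format, of s] ts ts1 by (auto simp: dist_real_def)
    also have "H s \<le> H t1"
      using convex_ereal_fun_le_max[OF H ts(2), of t1] ts(3,4) by (auto simp: max_def split: if_splits)
    finally show ?thesis .
  qed
  then have "H 0 \<le> H t1" by (meson dense_le less_imp_le)
  also have "H t1 < H s1" by (rule ts1(4))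
  also have "H s1 \<le> H 0" using top ts1 by simp
  finally show False by simp
qed

lemma sv_convex_segment_superset:
  assumes f: "sv_convex f" and sub: "f x0 \<subseteq> f x" and s: "0 \<le> s" "s \<le> 1"
  shows "f x0 \<subseteq> f (x0 + s *\<^sub>R (x - x0))"
proof (cases "s = 0 \<or> s = 1")
  case True then show ?thesis using sub by auto
next
  case False
  then have s': "0 < s" "s < 1" using s by auto
  show ?thesis
  proof
    fix a assume "a \<in> f x0"
    then have "s *\<^sub>R a + (1 - s) *\<^sub>R a \<in> f (s *\<^sub>R x + (1 - s) *\<^sub>R x0)"
      using sv_convex_mem[OF f s'] sub by blast
    moreover have "s *\<^sub>R x + (1 - s) *\<^sub>R x0 = x0 + s *\<^sub>R (x - x0)" by (simp add: algebra_simps)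
    ultimately show "a \<in> f (x0 + s *\<^sub>R (x - x0))" by (simp add: algebra_simps)
  qed
qed

text \<open>If f(P(s)) = f(x0), then f(x0) is invariant under a \<mapsto> s z + (1 - s) a for z \<in> f(x), so
  iterating from any a \<in> f(x0) approaches z; as f(x0) is closed, z \<in> f(x0).\<close>

lemma sv_convex_segment_neq:
  fixes f :: "'x::real_vector \<Rightarrow> 'z::{real_vector,t2_space} set"
  assumes lc: "lc_tvs TYPE('z)" and f: "sv_convex f" and closed: "closed (f x0)" and a: "a \<in> f x0"
    and sub: "f x0 \<subseteq> f x" and ne: "f x \<noteq> f x0" and s: "0 < s" "s < 1"
  shows "f (x0 + s *\<^sub>R (x - x0)) \<noteq> f x0"
proof
  assume eq: "f (x0 + s *\<^sub>R (x - x0)) = f x0"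
  obtain z where z: "z \<in> f x" "z \<notin> f x0" using sub ne by blast
  have step: "s *\<^sub>R z + (1 - s) *\<^sub>R b \<in> f x0" if "b \<in> f x0" for b
  proof -
    have "s *\<^sub>R z + (1 - s) *\<^sub>R b \<in> f (s *\<^sub>R x + (1 - s) *\<^sub>R x0)"
      using sv_convex_mem[OF f s z(1) that] .
    moreover have "s *\<^sub>R x + (1 - s) *\<^sub>R x0 = x0 + s *\<^sub>R (x - x0)" by (simp add: algebra_simps)
    ultimately show ?thesis using eq by simp
  qed
  define a' where "a' n = z + ((1 - s) ^ n) *\<^sub>R (a - z)" for n
  have a'_mem: "a' n \<in> f x0" for n
  proof (induction n)
    case 0 then show ?case using a unfolding a'_def by simp
  next
    case (Suc n)
    have "a' (Suc n) = s *\<^sub>R z + (1 - s) *\<^sub>R a' n" unfolding a'_def by (simp add: algebra_simps)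
    then show ?case using step[OF Suc] by simp
  qed
  have "(\<lambda>n. (1 - s) ^ n) \<longlonglongrightarrow> 0" using s by (intro LIMSEQ_power_zero) auto
  moreover have "isCont (\<lambda>t. z + t *\<^sub>R (a - z)) 0"
    using lc_tvs_continuous_line[OF lc] by (simp add: continuous_on_eq_continuous_at)
  ultimately have "a' \<longlonglongrightarrow> z" unfolding a'_def using isCont_tendsto_compose by fastforce
  moreover have "\<forall>\<^sub>F n in sequentially. a' n \<in> f x0" using a'_mem by simp
  ultimately have "z \<in> f x0"
    using Lim_in_closed_set[OF closed _ trivial_limit_sequentially] by blast
  then show False using z(2) by blast
qed

lemma phi_segment_no_descent_near_x0:
  assumes f: "sv_convex f" and zs: "linear zs" and sub: "f x0 \<subseteq> f x" and a: "a \<in> f x0"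
    and lsc: "lsc_at_pt (\<lambda>t. if t \<in> {0..1} then phi f zs (x0 + t *\<^sub>R (x - x0)) else \<infinity>) 0"
  shows "\<exists>\<delta>>0. \<forall>s. 0 < s \<and> s < \<delta> \<and> s < 1 \<longrightarrow>
           \<not> (phi f zs (x0 + s *\<^sub>R (x - x0)) \<noteq> -\<infinity> \<and>
              phi_dir f zs (x0 + s *\<^sub>R (x - x0)) (x0 - (x0 + s *\<^sub>R (x - x0))) < 0)"
proof -
  define P where "P t = x0 + t *\<^sub>R (x - x0)" for t
  define H where "H t = phi f zs (P t)" for t
  have convex: "convex_ereal_fun H"
    unfolding H_def P_def by (rule convex_ereal_fun_phi_segment[OF f zs])
  have top: "H t \<le> H 0" if "0 \<le> t" "t \<le> 1" for t
    unfolding H_def P_def using phi_antimono[where f=f, OF sv_convex_segment_superset[OF f sub that]] by simp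
  have H0: "H 0 \<noteq> \<infinity>"
    unfolding H_def P_def using phi_less_PInf[of f x0 zs] a by auto
  obtain \<delta> where \<delta>: "\<delta> > 0" and no_descent: "\<And>t s. 0 < t \<Longrightarrow> t < s \<Longrightarrow> s < \<delta> \<Longrightarrow> s \<le> 1 \<Longrightarrow> H s \<le> H t"
    using convex_ereal_fun_no_descent_near_zero[OF convex top lsc[folded P_def H_def]] by blast
  have False if s: "0 < s" "s < \<delta>" "s < 1" and fin: "H s \<noteq> -\<infinity>"
    and dir: "phi_dir f zs (P s) (x0 - P s) < 0" for s
  proof -
    obtain hs where "H s = ereal hs" using fin top[of s] H0 s by (cases "H s") auto
    then obtain \<tau> where "\<tau> > 0" "phi f zs (P s + \<tau> *\<^sub>R (x0 - P s)) < phi f zs (P s)"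
      using phi_dir_less_zero_imp_descent[OF dir] unfolding H_def by blast
    moreover have "P s + \<tau> *\<^sub>R (x0 - P s) = P (s - \<tau> * s)" unfolding P_def by (simp add: algebra_simps)
    ultimately have descent: "H (s - \<tau> * s) < H s" and "s - \<tau> * s < s"
      using s(1) unfolding H_def by simp_all
    moreover have "0 < s - \<tau> * s"
      using convex_ereal_fun_descent_positive[OF convex s(1) top[of s] H0 descent] s \<open>s - \<tau> * s < s\<close> by simp
    ultimately show False using no_descent[of "s - \<tau> * s" s] s by fastforce
  qed
  then show ?thesis using \<delta> unfolding H_def P_def by blast
qed

lemma scalar_minty_imp_Min_value:
  fixes C :: "'z::{real_vector,t2_space} set" and f :: "'x::real_vector \<Rightarrow> 'z set"
  assumes lc: "lc_tvs TYPE('z)"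
    and f_G: "\<forall>x. f x \<in> G_space C" and f: "sv_convex f" and x0_dom: "x0 \<in> sv_dom f"
    and M: "finite M" "M \<subseteq> neg_dual_cone C - {\<lambda>_. 0}"
    and minty: "\<forall>x. f x \<noteq> f x0 \<longrightarrow> (\<exists>zs \<in> M. phi f zs x \<noteq> -\<infinity> \<and> phi_dir f zs x (x0 - x) < 0)"
    and lsc: "\<forall>x. \<forall>zs \<in> M.
               lsc_at_pt (\<lambda>t. if t \<in> {0..1} then phi f zs (x0 + t *\<^sub>R (x - x0)) else \<infinity>) 0"
  shows "is_Min_value f x0"
  unfolding is_Min_value_def
proof (intro allI impI, rule ccontr)
  fix x assume sub: "f x0 \<subseteq> f x" and ne: "f x \<noteq> f x0"
  define P where "P s = x0 + s *\<^sub>R (x - x0)" for s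
  obtain a where a: "a \<in> f x0" using x0_dom unfolding sv_dom_def by blast
  have "\<exists>\<delta>>0. \<forall>s. 0 < s \<and> s < \<delta> \<and> s < 1 \<longrightarrow>
      \<not> (phi f zs (P s) \<noteq> -\<infinity> \<and> phi_dir f zs (P s) (x0 - P s) < 0)" if zs: "zs \<in> M" for zs
  proof -
    have "linear zs" using zs M(2) unfolding neg_dual_cone_def top_dual_def by auto
    then show ?thesis
      unfolding P_def using phi_segment_no_descent_near_x0[OF f _ sub a] lsc zs by blast
  qed
  then obtain \<delta> where \<delta>: "\<And>zs. zs \<in> M \<Longrightarrow> \<delta> zs > 0"
    and no_minty: "\<And>zs s. zs \<in> M \<Longrightarrow> 0 < s \<Longrightarrow> s < \<delta> zs \<Longrightarrow> s < 1 \<Longrightarrow>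
      \<not> (phi f zs (P s) \<noteq> -\<infinity> \<and> phi_dir f zs (P s) (x0 - P s) < 0)"
    by metis
  define dm where "dm = Min (\<delta> ` M)"
  have "M \<noteq> {}" using minty ne by auto
  then have dm: "0 < dm" "\<And>zs. zs \<in> M \<Longrightarrow> dm \<le> \<delta> zs"
    using M(1) \<delta> unfolding dm_def by (auto simp: Min_gr_iff)
  define s where "s = min dm 1 / 2"
  have "0 < s" "s < 1" "s < dm" using dm(1) unfolding s_def by auto
  then have s: "0 < s" "s < 1" "\<And>zs. zs \<in> M \<Longrightarrow> s < \<delta> zs"
    using dm(2) by (auto intro: order.strict_trans2)
  have "f x0 = closure (convex hull (sum_set (f x0) C))" using f_G unfolding G_space_def by blast
  then have closed: "closed (f x0)" using closed_closure by metis
  have "f (P s) \<noteq> f x0" unfolding P_def by (rule sv_convex_segment_neq[OF lc f closed a sub ne s(1,2)])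
  then obtain zs where "zs \<in> M" "phi f zs (P s) \<noteq> -\<infinity>" "phi_dir f zs (P s) (x0 - P s) < 0"
    using minty by blast
  then show False using no_minty s by blast
qed

theorem mainTheorem4:
  fixes C :: "'z::{real_vector,t2_space} set"
    and f :: "'x::real_vector \<Rightarrow> 'z set"
    and x0 :: 'x
  assumes lc: "lc_tvs TYPE('z)"
    and C_closed: "closed C" and C_convex: "convex C" and C_cone: "cone C" and C_0: "0 \<in> C"
    and C_dual: "neg_dual_cone C - {\<lambda>_. 0} \<noteq> {}"
    and f_G: "\<forall>x. f x \<in> G_space C"
    and f_convex: "sv_convex f"
    and x0_dom: "x0 \<in> sv_dom f"
  shows "(is_Min_value f x0 \<longrightarrow>
            (\<forall>x. f x \<noteq> f x0 \<longrightarrow>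
               (\<exists>zs \<in> neg_dual_cone C - {\<lambda>_. 0}.
                  phi f zs x \<noteq> -\<infinity> \<and> phi_dir f zs x (x0 - x) < 0)))
       \<and> (\<forall>M. finite M \<and> M \<subseteq> neg_dual_cone C - {\<lambda>_. 0} \<and>
            (\<forall>x. f x \<noteq> f x0 \<longrightarrow>
               (\<exists>zs \<in> M. phi f zs x \<noteq> -\<infinity> \<and> phi_dir f zs x (x0 - x) < 0)) \<and>
            (\<forall>x. \<forall>zs \<in> M.
               lsc_at_pt (\<lambda>t. if t \<in> {0..1} then phi f zs (x0 + t *\<^sub>R (x - x0)) else \<infinity>) 0)
            \<longrightarrow> is_Min_value f x0)"
proof (intro conjI allI impI)
  fix x assume "is_Min_value f x0" and "f x \<noteq> f x0"
  then show "\<exists>zs \<in> neg_dual_cone C - {\<lambda>_. 0}. phi f zs x \<noteq> -\<infinity> \<and> phi_dir f zs x (x0 - x) < 0"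
    by (rule Min_value_imp_scalar_minty[OF lc C_cone C_0 C_dual f_G f_convex])
next
  fix M assume "finite M \<and> M \<subseteq> neg_dual_cone C - {\<lambda>_. 0} \<and>
      (\<forall>x. f x \<noteq> f x0 \<longrightarrow> (\<exists>zs \<in> M. phi f zs x \<noteq> -\<infinity> \<and> phi_dir f zs x (x0 - x) < 0)) \<and>
      (\<forall>x. \<forall>zs \<in> M. lsc_at_pt (\<lambda>t. if t \<in> {0..1} then phi f zs (x0 + t *\<^sub>R (x - x0)) else \<infinity>) 0)"
  then show "is_Min_value f x0"
    using scalar_minty_imp_Min_value[OF lc f_G f_convex x0_dom] by blast
qed

end
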